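(* Let $T:X\to Y$ be a disjointness preserving linear bijection between Archimedean vector lattices. Then $T$ satisfies condition $(\beta)$ if and only if $T^{-1}$ is disjointness preserving.
   Context: All vector lattices are Archimedean. For a subset $A$ of a vector lattice $X$, $A^d=\{x\in X: |x|\wedge|a|=0 \text{ for all } a\in A\}$ and $A^{dd}=(A^d)^d$. For $a,b\in X$ we write $a\lhd b$ if $\{a\}^{dd}\subseteq\{b\}^{dd}$. A linear operator $S$ satisfies condition $(\beta)$ if $Sa\lhd Sb$ whenever $a\lhd b$. A linear operator is disjointness preserving if it maps disjoint elements to disjoint elements. *)

theory Defs
  imports "HOL-Analysis.Analysis" "HOL-Library.Lattice_Algebras"
begin

class vector_lattice = ordered_real_vector + lattice_ab_group_add_abs

class archimedean_vector_lattice = vector_lattice +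
  assumes archimedean_vl: "0 \<le> x \<Longrightarrow> (\<And>n::nat. real n *\<^sub>R x \<le> y) \<Longrightarrow> x = 0"

definition disj_compl :: "'a::vector_lattice set \<Rightarrow> 'a set" where
  "disj_compl A = {x. \<forall>a\<in>A. inf \<bar>x\<bar> \<bar>a\<bar> = 0}"

definition band_le :: "'a::vector_lattice \<Rightarrow> 'a \<Rightarrow> bool" where
  "band_le a b \<longleftrightarrow> disj_compl (disj_compl {a}) \<subseteq> disj_compl (disj_compl {b})"

definition disjointness_preserving :: "('a::vector_lattice \<Rightarrow> 'b::vector_lattice) \<Rightarrow> bool" where
  "disjointness_preserving S \<longleftrightarrow>
     (\<forall>x y. inf \<bar>x\<bar> \<bar>y\<bar> = 0 \<longrightarrow> inf \<bar>S x\<bar> \<bar>S y\<bar> = 0)"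

definition condition_beta :: "('a::vector_lattice \<Rightarrow> 'b::vector_lattice) \<Rightarrow> bool" where
  "condition_beta S \<longleftrightarrow> (\<forall>a b. band_le a b \<longrightarrow> band_le (S a) (S b))"

end

theory Submission
  imports Defs
begin

text \<open>If \<open>T\<close> satisfies \<open>(\<beta>)\<close> and \<open>T u \<bottom> T v\<close>, then \<open>T (\<bar>u\<bar> \<sqinter> \<bar>v\<bar>)\<close> lies in the bands
  generated by the two disjoint elements \<open>T u\<close> and \<open>T v\<close>, so it is disjoint from itself and
  vanishes; injectivity gives \<open>u \<bottom> v\<close>. Conversely, if \<open>T\<close> and \<open>T\<^sup>-\<^sup>1\<close> both preserve
  disjointness, then \<open>T\<close> commutes with disjoint complements and maps the band \<open>{a}\<^sup>d\<^sup>d\<close> onto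
  \<open>{T a}\<^sup>d\<^sup>d\<close>.\<close>

lemma disj_compl_antimono: "A \<subseteq> B \<Longrightarrow> disj_compl B \<subseteq> disj_compl A"
  unfolding disj_compl_def by auto

lemma disj_compl_singleton_iff: "x \<in> disj_compl {a} \<longleftrightarrow> inf \<bar>x\<bar> \<bar>a\<bar> = 0"
  unfolding disj_compl_def by auto

lemma mem_disj_compl_disj_compl_self: "a \<in> disj_compl (disj_compl {a})"
  unfolding disj_compl_def by (auto simp: inf_commute)

lemma band_le_inf_abs:
  fixes x y :: "'a::vector_lattice"
  shows "band_le (inf \<bar>x\<bar> \<bar>y\<bar>) x"
proof -
  let ?z = "inf \<bar>x\<bar> \<bar>y\<bar>"
  have "disj_compl {x} \<subseteq> disj_compl {?z}"
  proof
    fix w assume "w \<in> disj_compl {x}"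
    then have "inf \<bar>w\<bar> \<bar>x\<bar> = 0" by (simp add: disj_compl_singleton_iff)
    moreover have "inf \<bar>w\<bar> ?z \<le> inf \<bar>w\<bar> \<bar>x\<bar>"
      by (simp add: inf.coboundedI2)
    ultimately have "inf \<bar>w\<bar> ?z = 0"
      by (simp add: order_antisym)
    then show "w \<in> disj_compl {?z}"
      by (simp add: disj_compl_singleton_iff abs_of_nonneg)
  qed
  then show ?thesis
    unfolding band_le_def by (rule disj_compl_antimono)
qed

lemma band_le_disjoint_eq_0:
  fixes z a b :: "'a::vector_lattice"
  assumes za: "band_le z a" and zb: "band_le z b" and ab: "inf \<bar>a\<bar> \<bar>b\<bar> = 0"
  shows "z = 0"
proof -
  have z_dd_a: "z \<in> disj_compl (disj_compl {a})"
    using za mem_disj_compl_disj_compl_self unfolding band_le_def by blast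
  have z_dd_b: "z \<in> disj_compl (disj_compl {b})"
    using zb mem_disj_compl_disj_compl_self unfolding band_le_def by blast
  have "b \<in> disj_compl {a}"
    using ab by (simp add: disj_compl_singleton_iff inf_commute)
  then have "z \<in> disj_compl {b}"
    using z_dd_a by (simp add: disj_compl_def)
  then have "inf \<bar>z\<bar> \<bar>z\<bar> = 0"
    using z_dd_b unfolding disj_compl_def by blast
  then show "z = 0" by simp
qed

lemma disjointness_preserving_inv_if_condition_beta:
  fixes T :: "'a::vector_lattice \<Rightarrow> 'b::vector_lattice"
  assumes "bij T" and "T 0 = 0" and beta: "condition_beta T"
  shows "disjointness_preserving (inv T)"
  unfolding disjointness_preserving_def
proof (intro allI impI)
  fix x y :: 'b
  assume xy: "inf \<bar>x\<bar> \<bar>y\<bar> = 0"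
  define u v where "u = inv T x" and "v = inv T y"
  have x: "x = T u" and y: "y = T v"
    using \<open>bij T\<close> by (simp_all add: u_def v_def bij_is_surj surj_f_inv_f)
  have "band_le (inf \<bar>u\<bar> \<bar>v\<bar>) u" and "band_le (inf \<bar>u\<bar> \<bar>v\<bar>) v"
    using band_le_inf_abs[of u v] band_le_inf_abs[of v u] by (simp_all add: inf_commute)
  then have "band_le (T (inf \<bar>u\<bar> \<bar>v\<bar>)) x" and "band_le (T (inf \<bar>u\<bar> \<bar>v\<bar>)) y"
    using beta unfolding condition_beta_def x y by blast+
  then have "T (inf \<bar>u\<bar> \<bar>v\<bar>) = T 0"
    using band_le_disjoint_eq_0 xy \<open>T 0 = 0\<close> by metis
  then show "inf \<bar>inv T x\<bar> \<bar>inv T y\<bar> = 0"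
    using \<open>bij T\<close> by (simp add: u_def v_def bij_is_inj inj_eq)
qed

lemma disj_compl_image:
  assumes "surj T" and disjoint_iff: "\<And>u v. inf \<bar>T u\<bar> \<bar>T v\<bar> = 0 \<longleftrightarrow> inf \<bar>u\<bar> \<bar>v\<bar> = 0"
  shows "disj_compl (T ` A) = T ` disj_compl A"
proof
  show "disj_compl (T ` A) \<subseteq> T ` disj_compl A"
  proof
    fix y assume y: "y \<in> disj_compl (T ` A)"
    obtain u where u: "y = T u" using \<open>surj T\<close> by (metis surjD)
    have "u \<in> disj_compl A" using y u disjoint_iff unfolding disj_compl_def by auto
    then show "y \<in> T ` disj_compl A" using u by blast
  qed
  show "T ` disj_compl A \<subseteq> disj_compl (T ` A)"
    using disjoint_iff unfolding disj_compl_def by auto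
qed

lemma condition_beta_if_disjointness_iff:
  assumes "surj T" and "\<And>u v. inf \<bar>T u\<bar> \<bar>T v\<bar> = 0 \<longleftrightarrow> inf \<bar>u\<bar> \<bar>v\<bar> = 0"
  shows "condition_beta T"
proof -
  have "disj_compl (disj_compl {T a}) = T ` disj_compl (disj_compl {a})" for a
    using disj_compl_image[OF assms] by (metis image_empty image_insert)
  then show ?thesis
    unfolding condition_beta_def band_le_def by (simp add: image_mono)
qed

theorem proposition3p6:
  fixes T :: "'a::archimedean_vector_lattice \<Rightarrow> 'b::archimedean_vector_lattice"
  assumes "linear T" and "bij T" and "disjointness_preserving T"
  shows "condition_beta T \<longleftrightarrow> disjointness_preserving (inv T)"
proof
  assume "condition_beta T"
  then show "disjointness_preserving (inv T)"
    using disjointness_preserving_inv_if_condition_beta assms(1,2) linear_0 by blast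
next
  assume "disjointness_preserving (inv T)"
  then have "inf \<bar>T u\<bar> \<bar>T v\<bar> = 0 \<longleftrightarrow> inf \<bar>u\<bar> \<bar>v\<bar> = 0" for u v
    using assms(2,3) unfolding disjointness_preserving_def by (metis bij_inv_eq_iff)
  then show "condition_beta T"
    using condition_beta_if_disjointness_iff bij_is_surj assms(2) by blast
qed

end
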